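(* Let $\Bbbk$ be an algebraically closed field and let $A=\Bbbk Q/I$ be a selfinjective algebra, where $Q$ is a finite quiver with vertices $1,\dots,r$ and $I\subseteq\Bbbk Q$ is an admissible ideal. Then for every $1\le i\le r$ there is an arrow in $\widetilde Q^+$ ending at vertex $i$.
   Context: $DA=\operatorname{Hom}_\Bbbk(A,\Bbbk)$ with its natural $A$-bimodule structure, and $T(A)=A\ltimes DA$ is the trivial extension, the vector space $A\oplus DA$ with multiplication $(a,f)(b,g)=(ab,ag+fb)$. Let $e_1,\dots,e_r$ be the primitive idempotents of $A$ corresponding to the vertices of $Q$, $A^{\mathrm e}=A\otimes_\Bbbk A^{\mathrm{op}}$, and $\operatorname{soc}_{A^{\mathrm e}}A$ the socle of $A$ as an $A$-bimodule. The quiver $\widetilde Q$ of $T(A)$ has the same vertices as $Q$ and its arrow set is $Q_1\cup\widetilde Q^+$, where $Q_1$ is the arrow set of $Q$ and $\widetilde Q^+$ is the set of new arrows, corresponding to the summand $D(\operatorname{soc}_{A^{\mathrm e}}A)$ of $\operatorname{rad}T(A)/\operatorname{rad}^2T(A)\cong\mathfrak r/\mathfrak r^2\oplus D(\operatorname{soc}_{A^{\mathrm e}}A)$ ($\mathfrak r$ the radical of $A$): the number of arrows of $\widetilde Q^+$ from vertex $i$ to vertex $j$ equals $\dim_\Bbbk e_j D(\operatorname{soc}_{A^{\mathrm e}}A) e_i$. *)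

theory Defs
  imports "HOL-Computational_Algebra.Polynomial" "HOL-Library.Function_Algebras"
begin

text \<open>A finite-dimensional associative unital algebra over a field: the ring
  structure is given by the type class ring_1 on 'a, the k-vector space
  structure by the scalar multiplication sc.\<close>

definition fd_algebra :: "('k::field \<Rightarrow> 'a::ring_1 \<Rightarrow> 'a) \<Rightarrow> bool" where
  "fd_algebra sc \<longleftrightarrow>
     vector_space sc \<and>
     (\<exists>B. finite B \<and> module.span sc B = UNIV) \<and>
     (\<forall>c x y. sc c (x * y) = sc c x * y \<and> sc c (x * y) = x * sc c y)"

definition idempotent :: "'a::ring_1 \<Rightarrow> bool" where
  "idempotent e \<longleftrightarrow> e * e = e"

definition primitive_idempotent :: "'a::ring_1 \<Rightarrow> bool" where
  "primitive_idempotent e \<longleftrightarrow> e \<noteq> 0 \<and> idempotent e \<and>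
     \<not> (\<exists>f g. idempotent f \<and> idempotent g \<and> f \<noteq> 0 \<and> g \<noteq> 0 \<and>
             f * g = 0 \<and> g * f = 0 \<and> e = f + g)"

definition complete_primitive_idempotents :: "(nat \<Rightarrow> 'a::ring_1) \<Rightarrow> nat \<Rightarrow> bool" where
  "complete_primitive_idempotents e r \<longleftrightarrow>
     (\<forall>i\<in>{1..r}. primitive_idempotent (e i)) \<and>
     (\<forall>i\<in>{1..r}. \<forall>j\<in>{1..r}. i \<noteq> j \<longrightarrow> e i * e j = 0) \<and>
     (\<Sum>i\<in>{1..r}. e i) = 1"

definition left_ideal_gen :: "'a::ring_1 \<Rightarrow> 'a set" where
  "left_ideal_gen e = {a * e | a. True}"

text \<open>Isomorphism of left A-modules A e and A f (A-linearity includes k-linearity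
  since k acts through A).\<close>
definition left_modules_iso ::
  "('k::field \<Rightarrow> 'a::ring_1 \<Rightarrow> 'a) \<Rightarrow> 'a set \<Rightarrow> 'a set \<Rightarrow> bool" where
  "left_modules_iso sc M N \<longleftrightarrow>
     (\<exists>\<phi>. bij_betw \<phi> M N \<and>
          (\<forall>x\<in>M. \<forall>y\<in>M. \<phi> (x + y) = \<phi> x + \<phi> y) \<and>
          (\<forall>a. \<forall>x\<in>M. \<phi> (a * x) = a * \<phi> x) \<and>
          (\<forall>c. \<forall>x\<in>M. \<phi> (sc c x) = sc c (\<phi> x)))"

definition basic_wrt :: "('k::field \<Rightarrow> 'a::ring_1 \<Rightarrow> 'a) \<Rightarrow> (nat \<Rightarrow> 'a) \<Rightarrow> nat \<Rightarrow> bool" where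
  "basic_wrt sc e r \<longleftrightarrow>
     (\<forall>i\<in>{1..r}. \<forall>j\<in>{1..r}. i \<noteq> j \<longrightarrow>
        \<not> left_modules_iso sc (left_ideal_gen (e i)) (left_ideal_gen (e j)))"

definition right_ideal :: "('k::field \<Rightarrow> 'a::ring_1 \<Rightarrow> 'a) \<Rightarrow> 'a set \<Rightarrow> bool" where
  "right_ideal sc J \<longleftrightarrow> 0 \<in> J \<and> (\<forall>x\<in>J. \<forall>y\<in>J. x + y \<in> J) \<and>
     (\<forall>x\<in>J. \<forall>a. x * a \<in> J) \<and> (\<forall>c. \<forall>x\<in>J. sc c x \<in> J)"

definition right_module_hom ::
  "('k::field \<Rightarrow> 'a::ring_1 \<Rightarrow> 'a) \<Rightarrow> 'a set \<Rightarrow> ('a \<Rightarrow> 'a) \<Rightarrow> bool" where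
  "right_module_hom sc J f \<longleftrightarrow>
     (\<forall>x\<in>J. \<forall>y\<in>J. f (x + y) = f x + f y) \<and>
     (\<forall>x\<in>J. \<forall>a. f (x * a) = f x * a) \<and>
     (\<forall>c. \<forall>x\<in>J. f (sc c x) = sc c (f x))"

text \<open>Selfinjective: the regular module A_A is injective; stated via Baer's
  criterion (every homomorphism from a right ideal into A_A extends to A).\<close>
definition selfinjective :: "('k::field \<Rightarrow> 'a::ring_1 \<Rightarrow> 'a) \<Rightarrow> bool" where
  "selfinjective sc \<longleftrightarrow>
     (\<forall>J f. right_ideal sc J \<and> right_module_hom sc J f \<longrightarrow>
        (\<exists>g. right_module_hom sc UNIV g \<and> (\<forall>x\<in>J. g x = f x)))"

definition subbimodule :: "('k::field \<Rightarrow> 'a::ring_1 \<Rightarrow> 'a) \<Rightarrow> 'a set \<Rightarrow> bool" where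
  "subbimodule sc M \<longleftrightarrow> 0 \<in> M \<and> (\<forall>x\<in>M. \<forall>y\<in>M. x + y \<in> M) \<and>
     (\<forall>c. \<forall>x\<in>M. sc c x \<in> M) \<and> (\<forall>a. \<forall>x\<in>M. a * x \<in> M \<and> x * a \<in> M)"

definition simple_subbimodule :: "('k::field \<Rightarrow> 'a::ring_1 \<Rightarrow> 'a) \<Rightarrow> 'a set \<Rightarrow> bool" where
  "simple_subbimodule sc M \<longleftrightarrow> subbimodule sc M \<and> M \<noteq> {0} \<and>
     (\<forall>N. subbimodule sc N \<and> N \<subseteq> M \<longrightarrow> N = {0} \<or> N = M)"

definition bimodule_socle :: "('k::field \<Rightarrow> 'a::ring_1 \<Rightarrow> 'a) \<Rightarrow> 'a set" where
  "bimodule_socle sc = module.span sc (\<Union>{M. simple_subbimodule sc M})"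

text \<open>The k-dual D(S) of a subspace S of A, realised as the k-linear functionals
  S \<rightarrow> k, extended by 0 outside S.\<close>
definition kdual :: "('k::field \<Rightarrow> 'a::ring_1 \<Rightarrow> 'a) \<Rightarrow> 'a set \<Rightarrow> ('a \<Rightarrow> 'k) set" where
  "kdual sc S = {f. (\<forall>x\<in>S. \<forall>y\<in>S. f (x + y) = f x + f y) \<and>
                    (\<forall>c. \<forall>x\<in>S. f (sc c x) = c * f x) \<and>
                    (\<forall>x. x \<notin> S \<longrightarrow> f x = 0)}"

definition dual_act :: "'a set \<Rightarrow> 'a::ring_1 \<Rightarrow> ('a \<Rightarrow> 'k::field) \<Rightarrow> 'a \<Rightarrow> ('a \<Rightarrow> 'k)" where
  "dual_act S a f b = (\<lambda>x. if x \<in> S then f (b * x * a) else 0)"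

definition corner_dual_socle ::
  "('k::field \<Rightarrow> 'a::ring_1 \<Rightarrow> 'a) \<Rightarrow> (nat \<Rightarrow> 'a) \<Rightarrow> nat \<Rightarrow> nat \<Rightarrow> ('a \<Rightarrow> 'k) set" where
  "corner_dual_socle sc e j i =
     (let S = bimodule_socle sc in (\<lambda>f. dual_act S (e j) f (e i)) ` kdual sc S)"

text \<open>Number of arrows of the new arrow set \<open>\<widetilde>Q\<^sup>+\<close> from vertex i to vertex j:
  dim_k e_j D(soc_{A^e} A) e_i.\<close>
definition num_new_arrows ::
  "('k::field \<Rightarrow> 'a::ring_1 \<Rightarrow> 'a) \<Rightarrow> (nat \<Rightarrow> 'a) \<Rightarrow> nat \<Rightarrow> nat \<Rightarrow> nat" where
  "num_new_arrows sc e i j =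
     vector_space.dim (\<lambda>(c::'k) (f::'a \<Rightarrow> 'k) x. c * f x) (corner_dual_socle sc e j i)"

end

theory Submission
  imports Defs
begin

text \<open>For every vertex j choose x_j \<in> e_j A generating a minimal right ideal and a vertex
  \<nu>(j) with x_j e_\<nu>(j) \<noteq> 0. Baer's criterion turns right A-linear maps between right ideals
  into left multiplications, and Fitting's lemma makes every non-nilpotent element of the
  local ring e_j A e_j a unit; together they show that \<nu>(j) = \<nu>(l) forces A e_j \<cong> A e_l.
  As A is basic, \<nu> is a permutation (the Nakayama permutation). Given i, take j with
  \<nu>(j) = i. Self-injectivity also makes the ideal A x_j A a simple bimodule, so x_j lies in
  soc_{A^e} A, and a linear functional on the socle that does not vanish at e_j x_j e_i is a
  nonzero element of e_i D(soc_{A^e} A) e_j.\<close>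

definition minimal_right_ideal_gen :: "'a::ring_1 \<Rightarrow> bool" where
  "minimal_right_ideal_gen x \<longleftrightarrow> x \<noteq> 0 \<and> (\<forall>a. x * a \<noteq> 0 \<longrightarrow> (\<exists>b. x * a * b = x))"

lemma minimal_right_ideal_gen_mult:
  assumes "minimal_right_ideal_gen x" and "x * a \<noteq> 0"
  shows "minimal_right_ideal_gen (x * a)"
  unfolding minimal_right_ideal_gen_def
proof (intro conjI allI impI)
  fix s assume "x * a * s \<noteq> 0"
  then obtain b where "x * (a * s) * b = x"
    using assms(1) unfolding minimal_right_ideal_gen_def by (metis mult.assoc)
  then have "x * a * s * (b * a) = x * a" by (metis mult.assoc)
  then show "\<exists>b. x * a * s * b = x * a" by blast
qed (fact assms(2))

lemma primitive_idempotent_idem: "primitive_idempotent e \<Longrightarrow> e * e = e"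
  and primitive_idempotent_nonzero: "primitive_idempotent e \<Longrightarrow> e \<noteq> 0"
  by (simp_all add: primitive_idempotent_def idempotent_def)

lemma idem_mult_left_absorb: "e * e = e \<Longrightarrow> e * (e * x) = e * x"
  for e x :: "'a::ring_1"
  by (metis mult.assoc)

lemma corner_absorb:
  fixes e w :: "'a::ring_1"
  assumes "e * e = e" and "w = e * w * e"
  shows "e * w = w" and "w * e = w"
  using assms by (metis mult.assoc)+

lemma primitive_idempotent_eqI:
  fixes e i :: "'a::ring_1"
  assumes prim: "primitive_idempotent e"
    and "i * i = i" and "e * i = i" and "i * e = i" and "i \<noteq> 0"
  shows "i = e"
proof -
  define k where "k = e - i"
  have "k * k = k" "k * i = 0" "i * k = 0" "e = k + i"
    using primitive_idempotent_idem[OF prim] assms(2-4) by (simp_all add: k_def algebra_simps)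
  then have "k = 0"
    using prim assms(2,5) unfolding primitive_idempotent_def idempotent_def by blast
  then show ?thesis by (simp add: k_def)
qed

lemma fitting_idempotent:
  fixes w y :: "'a::ring_1"
  assumes wy: "w ^ (n + n) * y = w ^ n" and ker: "\<And>u. w ^ (n + n) * u = 0 \<Longrightarrow> w ^ n * u = 0"
  shows "w ^ n * y * (w ^ n * y) = w ^ n * y"
proof -
  define i where "i = w ^ n * y"
  have wi: "w ^ n * i = w ^ n" using wy by (simp add: i_def power_add mult.assoc)
  have "w ^ (n + n) * (y - y * i) = w ^ n * (i - i * i)"
    by (simp add: i_def power_add algebra_simps)
  also have "\<dots> = 0" using wi by (simp add: right_diff_distrib mult.assoc[symmetric])
  finally have "w ^ n * (y - y * i) = 0" by (rule ker)
  moreover have "i - i * i = w ^ n * (y - y * i)" by (simp add: i_def algebra_simps)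
  ultimately show ?thesis by (simp add: i_def)
qed

lemma power_ne_zero_if_right_fixed:
  fixes t w :: "'a::ring_1"
  assumes "t * w = t" and "t \<noteq> 0"
  shows "w ^ n \<noteq> 0"
proof
  have "t * w ^ n = t"
    by (induction n) (simp_all add: power_Suc2 mult.assoc[symmetric] assms(1))
  moreover assume "w ^ n = 0"
  ultimately show False using assms(2) by simp
qed

lemma power_ne_zero_if_left_fixed:
  fixes t w :: "'a::ring_1"
  assumes "w * t = t" and "t \<noteq> 0"
  shows "w ^ n \<noteq> 0"
proof
  have "w ^ n * t = t"
    by (induction n) (simp_all add: mult.assoc assms(1))
  moreover assume "w ^ n = 0"
  ultimately show False using assms(2) by simp
qed

lemma complete_primitive_idempotents_mult_nonzero:
  assumes "complete_primitive_idempotents e r" and "x \<noteq> 0"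
  shows "\<exists>k\<in>{1..r}. x * e k \<noteq> 0"
proof (rule ccontr)
  assume "\<not> ?thesis"
  then have "x * (\<Sum>k\<in>{1..r}. e k) = 0" by (simp add: sum_distrib_left)
  with assms show False by (simp add: complete_primitive_idempotents_def)
qed

fun right_ideal_sum :: "'a::ring_1 list \<Rightarrow> 'a set" where
  "right_ideal_sum [] = {0}"
| "right_ideal_sum (y # ys) = {y * t + p | t p. p \<in> right_ideal_sum ys}"

lemma right_ideal_sum_zero: "0 \<in> right_ideal_sum ys"
proof (induction ys)
  case (Cons y ys)
  then have "y * 0 + 0 \<in> right_ideal_sum (y # ys)" by (simp only: right_ideal_sum.simps) blast
  then show ?case by simp
qed simp

lemma right_ideal_sum_mult_right:
  "p \<in> right_ideal_sum ys \<Longrightarrow> p * a \<in> right_ideal_sum ys"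
proof (induction ys arbitrary: p)
  case (Cons y ys)
  then obtain t q where "p = y * t + q" "q \<in> right_ideal_sum ys" by auto
  with Cons.IH have "p * a = y * (t * a) + q * a" "q * a \<in> right_ideal_sum ys"
    by (simp_all add: algebra_simps)
  then show ?case by auto
qed simp

lemma right_ideal_sum_mult_left:
  "p \<in> right_ideal_sum ys \<Longrightarrow> a * p \<in> right_ideal_sum (map ((*) a) ys)"
proof (induction ys arbitrary: p)
  case (Cons y ys)
  then obtain t q where "p = y * t + q" "q \<in> right_ideal_sum ys" by auto
  with Cons.IH have "a * p = a * y * t + a * q" "a * q \<in> right_ideal_sum (map ((*) a) ys)"
    by (simp_all add: algebra_simps)
  then show ?case by auto
qed simp

lemma right_ideal_sum_append:
  "p \<in> right_ideal_sum ys \<Longrightarrow> q \<in> right_ideal_sum zs \<Longrightarrow> p + q \<in> right_ideal_sum (ys @ zs)"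
proof (induction ys arbitrary: p)
  case (Cons y ys)
  then obtain t p' where p: "p = y * t + p'" and "p' \<in> right_ideal_sum ys" by auto
  with Cons.IH Cons.prems(2) have "p' + q \<in> right_ideal_sum (ys @ zs)" by blast
  then have "y * t + (p' + q) \<in> right_ideal_sum ((y # ys) @ zs)" by auto
  then show ?case by (simp add: p add.assoc)
qed simp

lemma right_ideal_sum_add:
  "p \<in> right_ideal_sum ys \<Longrightarrow> q \<in> right_ideal_sum ys \<Longrightarrow> p + q \<in> right_ideal_sum ys"
proof (induction ys arbitrary: p q)
  case (Cons y ys)
  then obtain t p' s q' where "p = y * t + p'" "p' \<in> right_ideal_sum ys"
    and "q = y * s + q'" "q' \<in> right_ideal_sum ys" by auto
  with Cons.IH have "p + q = y * (t + s) + (p' + q')" "p' + q' \<in> right_ideal_sum ys"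
    by (simp_all add: algebra_simps)
  then show ?case by auto
qed simp

text \<open>A x A, as the finite sums of elements a x t.\<close>
definition ideal_gen :: "'a::ring_1 \<Rightarrow> 'a set" where
  "ideal_gen x = {p. \<exists>as. p \<in> right_ideal_sum (map (\<lambda>a. a * x) as)}"

lemma ideal_gen_self: "x \<in> ideal_gen x"
proof -
  have "x = 1 * x * 1 + 0" by simp
  then have "x \<in> right_ideal_sum (map (\<lambda>a. a * x) [1])"
    by (simp only: list.map right_ideal_sum.simps) blast
  then show ?thesis unfolding ideal_gen_def by blast
qed

lemma ideal_gen_zero: "0 \<in> ideal_gen x"
  unfolding ideal_gen_def using right_ideal_sum_zero by blast

lemma ideal_gen_add: "p \<in> ideal_gen x \<Longrightarrow> q \<in> ideal_gen x \<Longrightarrow> p + q \<in> ideal_gen x"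
  unfolding ideal_gen_def using right_ideal_sum_append by (fastforce simp flip: map_append)

lemma ideal_gen_mult_right: "p \<in> ideal_gen x \<Longrightarrow> p * a \<in> ideal_gen x"
  unfolding ideal_gen_def using right_ideal_sum_mult_right by blast

lemma ideal_gen_mult_left: "p \<in> ideal_gen x \<Longrightarrow> a * p \<in> ideal_gen x"
proof -
  assume "p \<in> ideal_gen x"
  then obtain as where "p \<in> right_ideal_sum (map (\<lambda>b. b * x) as)" unfolding ideal_gen_def by blast
  then have "a * p \<in> right_ideal_sum (map (\<lambda>b. b * x) (map ((*) a) as))"
    using right_ideal_sum_mult_left by (fastforce simp: comp_def mult.assoc)
  then show ?thesis unfolding ideal_gen_def by blast
qed

lemma ideal_gen_least:
  assumes "0 \<in> N" and "\<And>p q. p \<in> N \<Longrightarrow> q \<in> N \<Longrightarrow> p + q \<in> N"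
    and "\<And>a b. a * x * b \<in> N"
  shows "ideal_gen x \<subseteq> N"
proof -
  have "p \<in> N" if "p \<in> right_ideal_sum (map (\<lambda>a. a * x) as)" for p as
    using that by (induction as arbitrary: p) (auto simp: assms)
  then show ?thesis unfolding ideal_gen_def by blast
qed

lemma sum_fun_apply: "(\<Sum>b\<in>B. f b) y = (\<Sum>b\<in>B. f b y)"
  for f :: "'b \<Rightarrow> 'c \<Rightarrow> 'd::comm_monoid_add"
  by (induction B rule: infinite_finite_induct) auto

lemma vector_space_functions: "vector_space (\<lambda>(c::'k::field) (f::'b \<Rightarrow> 'k) y. c * f y)"
  by unfold_locales (auto simp: fun_eq_iff algebra_simps)

lemma (in vector_space) dim_pos_if_finitely_spanned:
  assumes "V \<subseteq> span F" and "finite F" and "v \<in> V" and "v \<noteq> 0"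
  shows "dim V > 0"
proof -
  obtain B where B: "B \<subseteq> V" "independent B" "V \<subseteq> span B" "card B = dim V"
    by (rule basis_exists)
  have "finite B" using independent_span_bound[OF assms(2) B(2)] B(1) assms(1) by blast
  moreover have "B \<noteq> {}" using B(3) assms(3,4) by auto
  ultimately have "card B > 0" by (simp add: card_gt_0_iff)
  with B(4) show ?thesis by simp
qed

section \<open>Baer's criterion\<close>

locale selfinjective_algebra =
  fixes sc :: "'k::field \<Rightarrow> 'a::ring_1 \<Rightarrow> 'a"
  assumes fd_algebra: "fd_algebra sc" and selfinjective: "selfinjective sc"
begin

sublocale vs: vector_space sc
  using fd_algebra by (simp add: fd_algebra_def)

lemma scale_mult_left: "sc c (x * y) = sc c x * y"
  and scale_mult_right: "sc c (x * y) = x * sc c y"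
  using fd_algebra unfolding fd_algebra_def by blast+

lemma scale_sandwich: "b * sc c y * a = sc c (b * y * a)"
  using scale_mult_left[of c "b * y" a] scale_mult_right[of c b y] by simp

lemma scale_eq_mult_right: "sc c x = x * sc c 1"
  by (metis mult_1_right scale_mult_right)

text \<open>Fixed only to reach the dimension theory of finite_dimensional_vector_space.\<close>
definition fd_basis :: "'a set" where
  "fd_basis = (SOME B. finite B \<and> vs.independent B \<and> vs.span B = UNIV)"

lemma fd_basis: "finite fd_basis" "vs.independent fd_basis" "vs.span fd_basis = UNIV"
proof -
  obtain B0 where B0: "finite B0" "vs.span B0 = UNIV"
    using fd_algebra unfolding fd_algebra_def by blast
  obtain B where B: "B \<subseteq> B0" "vs.independent B" "B0 \<subseteq> vs.span B"
    using vs.maximal_independent_subset[of B0] by blast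
  have "vs.span B = UNIV"
    using B(3) B0(2) vs.span_mono vs.span_span by blast
  with B B0(1) have "\<exists>B. finite B \<and> vs.independent B \<and> vs.span B = UNIV"
    by (blast intro: finite_subset)
  then have "finite fd_basis \<and> vs.independent fd_basis \<and> vs.span fd_basis = UNIV"
    unfolding fd_basis_def by (rule someI_ex)
  then show "finite fd_basis" "vs.independent fd_basis" "vs.span fd_basis = UNIV" by simp_all
qed

sublocale fdv: finite_dimensional_vector_space sc fd_basis
  by unfold_locales (simp_all add: fd_basis)

lemma right_idealI:
  assumes "0 \<in> J" and "\<And>x y. x \<in> J \<Longrightarrow> y \<in> J \<Longrightarrow> x + y \<in> J"
    and "\<And>x a. x \<in> J \<Longrightarrow> x * a \<in> J"
  shows "right_ideal sc J"
  unfolding right_ideal_def using assms by (metis scale_eq_mult_right)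

lemma right_ideal_subspace: "right_ideal sc J \<Longrightarrow> vs.subspace J"
  unfolding right_ideal_def vs.subspace_def by blast

lemma right_ideal_principal: "right_ideal sc {x * a | a. True}"
proof (rule right_idealI)
  show "0 \<in> {x * a | a. True}" by (metis (mono_tags) mem_Collect_eq mult_zero_right)
  show "y + z \<in> {x * a | a. True}" if "y \<in> {x * a | a. True}" "z \<in> {x * a | a. True}" for y z
    using that by (auto simp flip: distrib_left)
  show "y * b \<in> {x * a | a. True}" if "y \<in> {x * a | a. True}" for y b
    using that by (auto simp: mult.assoc)
qed

lemma right_ideal_principal_add:
  assumes "right_ideal sc P"
  shows "right_ideal sc {n * a + p | a p. p \<in> P}"
proof (rule right_idealI)
  have P0: "0 \<in> P" and Padd: "\<And>p q. p \<in> P \<Longrightarrow> q \<in> P \<Longrightarrow> p + q \<in> P"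
    and Pmult: "\<And>p a. p \<in> P \<Longrightarrow> p * a \<in> P"
    using assms unfolding right_ideal_def by blast+
  have "0 = n * 0 + 0" by simp
  then show "0 \<in> {n * a + p | a p. p \<in> P}" using P0 by blast
  fix x y c assume "x \<in> {n * a + p | a p. p \<in> P}"
  then obtain a p where x: "x = n * a + p" "p \<in> P" by blast
  then have "x * c = n * (a * c) + p * c" "p * c \<in> P"
    using Pmult by (simp_all add: algebra_simps)
  then show "x * c \<in> {n * a + p | a p. p \<in> P}" by blast
  assume "y \<in> {n * a + p | a p. p \<in> P}"
  then obtain b q where "y = n * b + q" "q \<in> P" by blast
  with x have "x + y = n * (a + b) + (p + q)" "p + q \<in> P"
    using Padd by (simp_all add: algebra_simps)
  then show "x + y \<in> {n * a + p | a p. p \<in> P}" by blast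
qed

lemma right_ideal_annihilator: "right_ideal sc {a. x * a = 0}"
  by (rule right_idealI) (simp_all add: distrib_left flip: mult.assoc)

lemma right_ideal_right_ideal_sum: "right_ideal sc (right_ideal_sum ys)"
  by (rule right_idealI)
    (simp_all add: right_ideal_sum_zero right_ideal_sum_add right_ideal_sum_mult_right)

lemma right_linear_map_is_left_mult:
  assumes J: "right_ideal sc J"
    and add: "\<And>x y. x \<in> J \<Longrightarrow> y \<in> J \<Longrightarrow> f (x + y) = f x + f y"
    and mult: "\<And>x a. x \<in> J \<Longrightarrow> f (x * a) = f x * a"
  obtains c where "\<And>x. x \<in> J \<Longrightarrow> f x = c * x"
proof -
  have "right_module_hom sc J f"
    unfolding right_module_hom_def using add mult by (metis scale_eq_mult_right)
  then obtain g where g: "right_module_hom sc UNIV g" and fg: "\<And>x. x \<in> J \<Longrightarrow> g x = f x"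
    using selfinjective J unfolding selfinjective_def by blast
  have "g x = g 1 * x" for x
    using g unfolding right_module_hom_def by (metis UNIV_I mult_1_left)
  with fg that show ?thesis by metis
qed

lemma exists_map_principal_add:
  fixes n m :: 'a
  assumes P: "right_ideal sc P" and kills: "\<And>a. n * a \<in> P \<Longrightarrow> m * a = 0"
  obtains f where "\<And>a p. p \<in> P \<Longrightarrow> f (n * a + p) = m * a"
proof -
  have Padd: "\<And>p q. p \<in> P \<Longrightarrow> q \<in> P \<Longrightarrow> p + q \<in> P"
    and Pmult: "\<And>p a. p \<in> P \<Longrightarrow> p * a \<in> P"
    using P unfolding right_ideal_def by blast+
  have well_defined: "m * a = m * a'" if "n * a + p = n * a' + p'" "p \<in> P" "p' \<in> P" for a a' p p'
  proof -
    have "n * (a - a') = p' + p * (- 1)"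
      using that(1) by (simp add: algebra_simps)
    also have "\<dots> \<in> P" using that(2,3) Padd Pmult by blast
    finally have "m * (a - a') = 0" by (rule kills)
    then show ?thesis by (simp add: right_diff_distrib)
  qed
  define f where "f y = m * fst (SOME ap. y = n * fst ap + snd ap \<and> snd ap \<in> P)" for y
  have "f (n * a + p) = m * a" if "p \<in> P" for a p
  proof -
    let ?ap = "SOME ap. n * a + p = n * fst ap + snd ap \<and> snd ap \<in> P"
    have "n * a + p = n * fst ?ap + snd ?ap \<and> snd ?ap \<in> P"
      by (rule someI[of _ "(a, p)"]) (simp add: that)
    then have "m * a = m * fst ?ap" using well_defined that by blast
    then show ?thesis by (simp add: f_def)
  qed
  then show ?thesis by (rule that)
qed

text \<open>Baer's criterion applied to n a + p \<mapsto> m a on the right ideal n A + P.\<close>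
lemma left_multiplier_exists:
  fixes n m :: 'a
  assumes P: "right_ideal sc P" and kills: "\<And>a. n * a \<in> P \<Longrightarrow> m * a = 0"
  obtains c where "c * n = m" and "\<And>p. p \<in> P \<Longrightarrow> c * p = 0"
proof -
  have P0: "0 \<in> P" and Padd: "\<And>p q. p \<in> P \<Longrightarrow> q \<in> P \<Longrightarrow> p + q \<in> P"
    and Pmult: "\<And>p a. p \<in> P \<Longrightarrow> p * a \<in> P"
    using P unfolding right_ideal_def by blast+
  obtain f where f: "\<And>a p. p \<in> P \<Longrightarrow> f (n * a + p) = m * a"
    using exists_map_principal_add[OF P kills] by blast
  define J where "J = {n * a + p | a p. p \<in> P}"
  have J: "right_ideal sc J" unfolding J_def using P by (rule right_ideal_principal_add)
  have f_add: "f (x + y) = f x + f y" if xy: "x \<in> J" "y \<in> J" for x y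
  proof -
    obtain a p b q where x: "x = n * a + p" "p \<in> P" and y: "y = n * b + q" "q \<in> P"
      using xy unfolding J_def by blast
    have "x + y = n * (a + b) + (p + q)" using x y by (simp add: algebra_simps)
    then have "f (x + y) = m * (a + b)" using f Padd x(2) y(2) by simp
    moreover have "f x = m * a" "f y = m * b" using f x y by simp_all
    ultimately show ?thesis by (simp add: distrib_left)
  qed
  have f_mult: "f (x * c) = f x * c" if x: "x \<in> J" for x c
  proof -
    obtain a p where x': "x = n * a + p" "p \<in> P" using x unfolding J_def by blast
    have "x * c = n * (a * c) + p * c" using x' by (simp add: algebra_simps)
    then have "f (x * c) = m * (a * c)" using f Pmult x'(2) by simp
    moreover have "f x = m * a" using f x' by simp
    ultimately show ?thesis by (simp add: mult.assoc)
  qed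
  obtain c where c: "\<And>x. x \<in> J \<Longrightarrow> f x = c * x"
    using right_linear_map_is_left_mult[OF J f_add f_mult] by blast
  have "n * a + p \<in> J" if "p \<in> P" for a p
    unfolding J_def using that by blast
  then have "c * (n * a + p) = m * a" if "p \<in> P" for a p
    using c[of "n * a + p"] f[OF that] that by simp
  from this[OF P0, of 1] this[of _ 0] show ?thesis
    by (intro that) simp_all
qed

lemma left_multiple_if_annihilator_le:
  fixes t t' :: 'a
  assumes "\<And>a. t * a = 0 \<Longrightarrow> t' * a = 0"
  obtains c where "c * t = t'"
proof -
  have "right_ideal sc {0}" by (rule right_idealI) simp_all
  moreover have "\<And>a. t * a \<in> {0} \<Longrightarrow> t' * a = 0" using assms by simp
  ultimately show ?thesis using left_multiplier_exists[of "{0}" t t'] that by blast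
qed

lemma exists_minimal_right_ideal_gen:
  fixes X :: "'a set"
  assumes "x0 \<in> X" and "x0 \<noteq> 0" and "\<And>x a. x \<in> X \<Longrightarrow> x * a \<in> X"
  obtains x where "x \<in> X" and "minimal_right_ideal_gen x"
proof -
  let ?R = "\<lambda>y::'a. {y * a | a. True}"
  obtain x where x: "x \<in> X" "x \<noteq> 0"
    and least: "\<And>y. y \<in> X \<Longrightarrow> y \<noteq> 0 \<Longrightarrow> vs.dim (?R x) \<le> vs.dim (?R y)"
    using ex_has_least_nat[of "\<lambda>y. y \<in> X \<and> y \<noteq> 0" x0 "\<lambda>y. vs.dim (?R y)"] assms(1,2)
    by blast
  have "\<exists>b. x * a * b = x" if "x * a \<noteq> 0" for a
  proof -
    have "?R (x * a) \<subseteq> ?R x" by (auto simp: mult.assoc)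
    moreover have "vs.dim (?R x) \<le> vs.dim (?R (x * a))"
      using least assms(3) x(1) that by blast
    ultimately have "?R (x * a) = ?R x"
      using fdv.subspace_dim_equal right_ideal_subspace right_ideal_principal by blast
    moreover have "x \<in> ?R x" by (metis (mono_tags) mem_Collect_eq mult_1_right)
    ultimately have "x \<in> ?R (x * a)" by simp
    then obtain b where "x = x * a * b" by blast
    then show ?thesis by metis
  qed
  with x show ?thesis using that unfolding minimal_right_ideal_gen_def by blast
qed

section \<open>Fitting's lemma and the Nakayama permutation\<close>

lemma decreasing_subspaces_stabilize:
  assumes sub: "\<And>m. vs.subspace (V m)" and dec: "\<And>m. V (Suc m) \<subseteq> V m"
  obtains N where "\<And>m. m \<ge> N \<Longrightarrow> V m = V N"
proof -
  obtain N where N: "\<forall>m. vs.dim (V N) \<le> vs.dim (V m)"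
    using ex_has_least_nat[of "\<lambda>_. True" 0 "\<lambda>m. vs.dim (V m)"] by auto
  have "V m = V N" if "m \<ge> N" for m
  proof -
    have "V m \<subseteq> V N" using dec that by (rule lift_Suc_antimono_le)
    then show ?thesis using fdv.subspace_dim_equal[OF sub sub, of m N] N by simp
  qed
  then show ?thesis using that by blast
qed

lemma increasing_subspaces_stabilize:
  assumes sub: "\<And>m. vs.subspace (V m)" and inc: "\<And>m. V m \<subseteq> V (Suc m)"
  obtains N where "\<And>m. m \<ge> N \<Longrightarrow> V m = V N"
proof -
  have "\<forall>m. True \<longrightarrow> vs.dim (V m) < Suc fdv.dimension"
    using fdv.dim_subset_UNIV by (simp add: le_imp_less_Suc)
  then obtain N where N: "\<forall>m. vs.dim (V m) \<le> vs.dim (V N)"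
    using ex_has_greatest_nat[of "\<lambda>_. True" 0 "\<lambda>m. vs.dim (V m)"] by blast
  have "V m = V N" if "m \<ge> N" for m
  proof -
    have "V N \<subseteq> V m" using inc that by (rule lift_Suc_mono_le)
    then show ?thesis using fdv.subspace_dim_equal[OF sub sub, of N m] N by simp
  qed
  then show ?thesis using that by blast
qed

lemma fitting_exponent:
  fixes w :: 'a
  obtains n where "n > 0" and "w ^ n \<in> {w ^ (n + n) * a | a. True}"
    and "\<And>u. w ^ (n + n) * u = 0 \<Longrightarrow> w ^ n * u = 0"
proof -
  have "{w ^ Suc m * a | a. True} \<subseteq> {w ^ m * a | a. True}" for m
    by (auto simp: power_Suc2 mult.assoc simp del: power_Suc)
  then obtain N1 where N1: "\<And>m. m \<ge> N1 \<Longrightarrow> {w ^ m * a | a. True} = {w ^ N1 * a | a. True}"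
    using decreasing_subspaces_stabilize[of "\<lambda>m. {w ^ m * a | a. True}"]
      right_ideal_subspace[OF right_ideal_principal] by blast
  have "{a. w ^ m * a = 0} \<subseteq> {a. w ^ Suc m * a = 0}" for m
    by (auto simp: mult.assoc)
  then obtain N2 where N2: "\<And>m. m \<ge> N2 \<Longrightarrow> {a. w ^ m * a = 0} = {a. w ^ N2 * a = 0}"
    using increasing_subspaces_stabilize[of "\<lambda>m. {a. w ^ m * a = 0}"]
      right_ideal_subspace[OF right_ideal_annihilator] by blast
  define n where "n = Suc (N1 + N2)"
  have "w ^ n \<in> {w ^ n * a | a. True}" by (metis (mono_tags) mem_Collect_eq mult_1_right)
  also have "{w ^ n * a | a. True} = {w ^ (n + n) * a | a. True}"
    using N1[of n] N1[of "n + n"] by (simp add: n_def)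
  finally have "w ^ n \<in> {w ^ (n + n) * a | a. True}" .
  moreover have "{a. w ^ (n + n) * a = 0} = {a. w ^ n * a = 0}"
    using N2[of n] N2[of "n + n"] by (simp add: n_def)
  ultimately show ?thesis by (intro that) (auto simp: n_def)
qed

text \<open>With w^n = w^(n+n) y for y \<in> e A e, i = w^n y is an idempotent of e A e, nonzero
  because w^n i = w^n; by primitivity i = e = w (w^(n-1) y).\<close>
lemma corner_right_inverse:
  fixes e w :: 'a
  assumes prim: "primitive_idempotent e" and we: "w = e * w * e" and nonnil: "\<And>n. w ^ n \<noteq> 0"
  obtains w' where "w' = e * w' * e" and "w * w' = e"
proof -
  have ee: "e * e = e" using prim by (rule primitive_idempotent_idem)
  have ew: "e * w = w" and wer: "w * e = w" using corner_absorb[OF ee we] by blast+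
  obtain n where "n > 0" and "w ^ n \<in> {w ^ (n + n) * a | a. True}"
    and ker: "\<And>u. w ^ (n + n) * u = 0 \<Longrightarrow> w ^ n * u = 0"
    using fitting_exponent[of w] by blast
  then obtain N y0 where n: "n = Suc N" and y0: "w ^ n = w ^ (n + n) * y0"
    using gr0_implies_Suc by blast
  have ewp: "e * w ^ Suc m = w ^ Suc m" for m
    by (simp add: mult.assoc[symmetric] ew)
  have wpe: "w ^ Suc m * e = w ^ Suc m" for m
    by (simp add: power_Suc2 mult.assoc wer del: power_Suc)
  define y where "y = e * y0 * e"
  have ye: "y * e = y" by (simp add: y_def mult.assoc ee)
  have "w ^ (n + n) * y = w ^ (n + n) * e * y0 * e" by (simp add: y_def mult.assoc)
  also have "\<dots> = w ^ n" using wpe[of "N + n"] wpe[of N] y0 n by simp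
  finally have wy: "w ^ (n + n) * y = w ^ n" .
  define i where "i = w ^ n * y"
  have wi: "w ^ n * i = w ^ n" using wy by (simp add: i_def power_add mult.assoc)
  have ii: "i * i = i" unfolding i_def using wy ker by (rule fitting_idempotent)
  have "e * i = i" using ewp[of N] by (simp add: i_def n mult.assoc[symmetric])
  moreover have "i * e = i" using ye by (simp add: i_def mult.assoc)
  moreover have "i \<noteq> 0" using wi nonnil by force
  ultimately have ie: "i = e" using primitive_idempotent_eqI[OF prim ii] by blast
  define w' where "w' = e * w ^ N * y"
  have "w * w' = w ^ n * y" by (simp add: w'_def n mult.assoc[symmetric] wer)
  then have "w * w' = e" using ie by (simp add: i_def)
  moreover have "w' = e * w' * e" by (simp add: w'_def mult.assoc ye idem_mult_left_absorb[OF ee])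
  ultimately show ?thesis using that by blast
qed

text \<open>w' w is a nonzero idempotent of e A e.\<close>
lemma corner_unit:
  fixes e w :: 'a
  assumes prim: "primitive_idempotent e" and we: "w = e * w * e" and nonnil: "\<And>n. w ^ n \<noteq> 0"
  obtains w' where "w' = e * w' * e" and "w * w' = e" and "w' * w = e"
proof -
  obtain w' where w': "w' = e * w' * e" "w * w' = e"
    by (rule corner_right_inverse[OF assms])
  have ee: "e * e = e" using prim by (rule primitive_idempotent_idem)
  have we': "w * e = w" and ew': "e * w' = w'" and w'e: "w' * e = w'"
    using corner_absorb[OF ee we] corner_absorb[OF ee w'(1)] by blast+
  have "w' * w * (w' * w) = w' * (w * w') * w" by (simp add: mult.assoc)
  then have "w' * w * (w' * w) = w' * w" using w'(2) w'e by simp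
  moreover have "e * (w' * w) = w' * w" by (simp add: ew' flip: mult.assoc)
  moreover have "w' * w * e = w' * w" by (simp add: we' mult.assoc)
  moreover have "w' * w \<noteq> 0"
  proof
    assume "w' * w = 0"
    then have "e * e = 0" using w'(2) by (metis mult.assoc mult_zero_left mult_zero_right)
    then show False using ee primitive_idempotent_nonzero[OF prim] by simp
  qed
  ultimately have "w' * w = e" using primitive_idempotent_eqI[OF prim] by blast
  with w' that show ?thesis by blast
qed

lemma annihilator_le_if_minimal:
  fixes e t t' :: 'a
  assumes prim: "primitive_idempotent e" and t: "t * e = t" "t \<noteq> 0"
    and t': "t' * e = t'" "minimal_right_ideal_gen t'" and ta: "t * a = 0"
  shows "t' * a = 0"
proof (rule ccontr)
  assume "t' * a \<noteq> 0"
  then obtain b where b: "t' * a * b = t'"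
    using t'(2) unfolding minimal_right_ideal_gen_def by blast
  define w where "w = e * (a * b) * e"
  have we: "w = e * w * e"
    using primitive_idempotent_idem[OF prim] by (simp add: w_def mult.assoc idem_mult_left_absorb)
  have "t' * w = t'" using b t'(1) by (simp add: w_def mult.assoc[symmetric])
  moreover have "t' \<noteq> 0" using t'(2) by (simp add: minimal_right_ideal_gen_def)
  ultimately have "\<And>n. w ^ n \<noteq> 0" by (rule power_ne_zero_if_right_fixed)
  then obtain w' where w': "w * w' = e" using corner_right_inverse[OF prim we] by blast
  have "t = t * w * w'" using w' t(1) by (simp add: mult.assoc)
  also have "t * w = 0" using ta t(1) by (simp add: w_def mult.assoc[symmetric])
  finally show False using t(2) by simp
qed

lemma corners_iso_if_mutual_multiples:
  fixes ej el t t' :: 'a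
  assumes pj: "primitive_idempotent ej" and pl: "primitive_idempotent el"
    and t: "t \<noteq> 0" "ej * t = t" and t': "el * t' = t'" and c: "c * t = t'" and d: "d * t' = t"
  obtains P Q where "P = ej * P * el" "Q = el * Q * ej" "P * Q = ej" "Q * P = el"
proof -
  have ejj: "ej * ej = ej" and ell: "el * el = el"
    using pj pl by (simp_all add: primitive_idempotent_idem)
  define g where "g = el * c * ej"
  define h where "h = ej * d * el"
  have gt: "g * t = t'" using c t(2) t' by (simp add: g_def mult.assoc)
  have ht: "h * t' = t" using d t(2) t' by (simp add: h_def mult.assoc)
  have elg: "el * g = g" and gej: "g * ej = g" and ejh: "ej * h = h" and hel: "h * el = h"
    using ejj ell by (simp_all add: g_def h_def mult.assoc idem_mult_left_absorb)
  define w where "w = h * g"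
  have we: "w = ej * w * ej"
    using ejj ell by (simp add: w_def g_def h_def mult.assoc idem_mult_left_absorb)
  have wt: "w * t = t" using gt ht by (simp add: w_def mult.assoc)
  obtain w' where w': "w' = ej * w' * ej" "w * w' = ej" "w' * w = ej"
    using corner_unit[OF pj we power_ne_zero_if_left_fixed[OF wt t(1)]] by blast
  have ejw': "ej * w' = w'" and w'ej: "w' * ej = w'" using corner_absorb[OF ejj w'(1)] by blast+
  define P where "P = w' * h"
  define Q where "Q = g"
  have "ej * P * el = (ej * w') * (h * el)" by (simp add: P_def mult.assoc)
  then have "P = ej * P * el" using ejw' hel by (simp add: P_def)
  moreover have "Q = el * Q * ej" using elg gej by (simp add: Q_def)
  moreover have "P * Q = ej" using w'(3) by (simp add: P_def Q_def w_def mult.assoc)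
  moreover have "Q * P = el"
  proof (rule primitive_idempotent_eqI[OF pl])
    have "Q * P * (Q * P) = g * w' * (w * w') * h" by (simp add: P_def Q_def w_def mult.assoc)
    also have "\<dots> = Q * P" using w'(2) ejh by (simp add: P_def Q_def mult.assoc)
    finally show "Q * P * (Q * P) = Q * P" .
    show "el * (Q * P) = Q * P" using elg by (simp add: P_def Q_def flip: mult.assoc)
    show "Q * P * el = Q * P" using hel by (simp add: P_def Q_def mult.assoc)
    have "w' * t = t" using wt w'(3) t(2) by (metis mult.assoc)
    then have "Q * P * t' = t'" using gt ht by (simp add: P_def Q_def mult.assoc)
    moreover have "t' \<noteq> 0" using d t(1) by auto
    ultimately show "Q * P \<noteq> 0" by auto
  qed
  ultimately show ?thesis using that by blast
qed

lemma left_modules_iso_if_inverse_corners: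
  fixes ej el :: 'a
  assumes ejj: "ej * ej = ej" and ell: "el * el = el"
    and P: "P = ej * P * el" and Q: "Q = el * Q * ej" and PQ: "P * Q = ej" and QP: "Q * P = el"
  shows "left_modules_iso sc (left_ideal_gen ej) (left_ideal_gen el)"
proof -
  have ejP: "ej * P = P" and Pel: "P * el = P" and elQ: "el * Q = Q" and Qej: "Q * ej = Q"
    using P Q ejj ell by (metis mult.assoc)+
  let ?A = "left_ideal_gen ej" and ?B = "left_ideal_gen el"
  have "bij_betw (\<lambda>y. y * P) ?A ?B"
  proof (rule bij_betw_byWitness[where f' = "\<lambda>z. z * Q"])
    show "\<forall>y\<in>?A. y * P * Q = y" using PQ ejj by (auto simp: left_ideal_gen_def mult.assoc)
    show "\<forall>z\<in>?B. z * Q * P = z" using QP ell by (auto simp: left_ideal_gen_def mult.assoc)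
    show "(\<lambda>y. y * P) ` ?A \<subseteq> ?B"
      using Pel by (auto simp: left_ideal_gen_def mult.assoc) (metis mult.assoc)
    show "(\<lambda>z. z * Q) ` ?B \<subseteq> ?A"
      using Qej by (auto simp: left_ideal_gen_def mult.assoc) (metis mult.assoc)
  qed
  then show ?thesis
    unfolding left_modules_iso_def by (auto simp: distrib_right mult.assoc scale_mult_left)
qed

lemma left_modules_iso_if_common_column:
  fixes ej el ek :: 'a
  assumes pj: "primitive_idempotent ej" and pl: "primitive_idempotent el"
    and pk: "primitive_idempotent ek"
    and x: "minimal_right_ideal_gen x" "ej * x = x" "x * ek \<noteq> 0"
    and x': "minimal_right_ideal_gen x'" "el * x' = x'" "x' * ek \<noteq> 0"
  shows "left_modules_iso sc (left_ideal_gen ej) (left_ideal_gen el)"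
proof -
  have ekk: "ek * ek = ek" using pk by (rule primitive_idempotent_idem)
  define t t' where "t = x * ek" and "t' = x' * ek"
  have tk: "t * ek = t" and t'k: "t' * ek = t'" by (simp_all add: t_def t'_def mult.assoc ekk)
  have tj: "ej * t = t" and t'l: "el * t' = t'"
    using x(2) x'(2) by (simp_all add: t_def t'_def flip: mult.assoc)
  have t: "minimal_right_ideal_gen t" and t': "minimal_right_ideal_gen t'"
    using x x' by (simp_all add: t_def t'_def minimal_right_ideal_gen_mult)
  have "t \<noteq> 0" "t' \<noteq> 0" using x(3) x'(3) by (simp_all add: t_def t'_def)
  obtain c where c: "c * t = t'"
    using left_multiple_if_annihilator_le[OF annihilator_le_if_minimal[OF pk tk \<open>t \<noteq> 0\<close> t'k t']]
    by blast
  obtain d where d: "d * t' = t"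
    using left_multiple_if_annihilator_le[OF annihilator_le_if_minimal[OF pk t'k \<open>t' \<noteq> 0\<close> tk t]]
    by blast
  obtain P Q where "P = ej * P * el" "Q = el * Q * ej" "P * Q = ej" "Q * P = el"
    using corners_iso_if_mutual_multiples[OF pj pl \<open>t \<noteq> 0\<close> tj t'l c d] by blast
  then show ?thesis
    by (rule left_modules_iso_if_inverse_corners[OF primitive_idempotent_idem[OF pj]
          primitive_idempotent_idem[OF pl]])
qed

lemma exists_minimal_right_ideal_gen_in_corner:
  fixes e :: 'a
  assumes "primitive_idempotent e"
  obtains x where "minimal_right_ideal_gen x" and "e * x = x"
proof -
  let ?X = "{e * a | a. True}"
  have "e \<in> ?X" by (metis (mono_tags) mem_Collect_eq mult_1_right)
  moreover have "\<And>y a. y \<in> ?X \<Longrightarrow> y * a \<in> ?X" by (auto simp: mult.assoc)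
  ultimately obtain x where "x \<in> ?X" "minimal_right_ideal_gen x"
    using exists_minimal_right_ideal_gen[of e ?X] primitive_idempotent_nonzero[OF assms] by blast
  with primitive_idempotent_idem[OF assms] show ?thesis
    by (intro that[of x]) (auto simp flip: mult.assoc)
qed

text \<open>The map j \<mapsto> k with x_j e_k \<noteq> 0, for generators x_j of minimal right ideals in e_j A,
  is injective because A is basic, hence surjective.\<close>
lemma nakayama_permutation_surj:
  assumes cpi: "complete_primitive_idempotents e r" and basic: "basic_wrt sc e r"
    and i: "i \<in> {1..r}"
  obtains j x where "j \<in> {1..r}" "minimal_right_ideal_gen x" "e j * x = x" "x * e i \<noteq> 0"
proof -
  have prim: "\<And>j. j \<in> {1..r} \<Longrightarrow> primitive_idempotent (e j)"
    using cpi by (simp add: complete_primitive_idempotents_def)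
  have "\<exists>x. minimal_right_ideal_gen x \<and> e j * x = x" if "j \<in> {1..r}" for j
    using exists_minimal_right_ideal_gen_in_corner[OF prim[OF that]] by blast
  then have "\<exists>X. \<forall>j\<in>{1..r}. minimal_right_ideal_gen (X j) \<and> e j * X j = X j"
    by (intro bchoice) blast
  then obtain X where X: "\<And>j. j \<in> {1..r} \<Longrightarrow> minimal_right_ideal_gen (X j) \<and> e j * X j = X j"
    by blast
  have "\<exists>k\<in>{1..r}. X j * e k \<noteq> 0" if "j \<in> {1..r}" for j
    using complete_primitive_idempotents_mult_nonzero[OF cpi] X[OF that]
    by (simp add: minimal_right_ideal_gen_def)
  then have "\<exists>\<nu>. \<forall>j\<in>{1..r}. \<nu> j \<in> {1..r} \<and> X j * e (\<nu> j) \<noteq> 0"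
    by (intro bchoice) blast
  then obtain \<nu> where \<nu>: "\<And>j. j \<in> {1..r} \<Longrightarrow> \<nu> j \<in> {1..r} \<and> X j * e (\<nu> j) \<noteq> 0"
    by blast
  have "inj_on \<nu> {1..r}"
  proof (rule inj_onI, rule ccontr)
    fix j l assume jl: "j \<in> {1..r}" "l \<in> {1..r}" "\<nu> j = \<nu> l" "j \<noteq> l"
    have k: "\<nu> j \<in> {1..r}" using \<nu> jl(1) by blast
    have "minimal_right_ideal_gen (X j)" "e j * X j = X j" "X j * e (\<nu> j) \<noteq> 0"
      "minimal_right_ideal_gen (X l)" "e l * X l = X l" "X l * e (\<nu> j) \<noteq> 0"
      using X[OF jl(1)] X[OF jl(2)] \<nu>[OF jl(1)] \<nu>[OF jl(2)] by (simp_all add: jl(3))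
    then have "left_modules_iso sc (left_ideal_gen (e j)) (left_ideal_gen (e l))"
      by (rule left_modules_iso_if_common_column[OF prim[OF jl(1)] prim[OF jl(2)] prim[OF k]])
    with basic jl show False by (simp add: basic_wrt_def)
  qed
  then have "\<nu> ` {1..r} = {1..r}" using \<nu> by (intro endo_inj_surj) auto
  with i obtain j where "j \<in> {1..r}" "\<nu> j = i" by (metis imageE)
  with X \<nu> show ?thesis by (intro that) auto
qed

section \<open>The bimodule socle and its dual\<close>

text \<open>If n A meets the right ideal of the tail, minimality puts n into it; otherwise Baer's
  criterion yields a left multiplier fixing n and killing the tail.\<close>
lemma minimal_right_ideal_gen_in_sum:
  fixes n :: 'a
  assumes n: "minimal_right_ideal_gen n"
  shows "n \<in> right_ideal_sum ys \<Longrightarrow> \<exists>y\<in>set ys. \<exists>c b. n = c * y * b"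
proof (induction ys)
  case Nil
  then show ?case using n by (simp add: minimal_right_ideal_gen_def)
next
  case (Cons y ys)
  show ?case
  proof (cases "\<exists>s. n * s \<in> right_ideal_sum ys \<and> n * s \<noteq> 0")
    case True
    then obtain s b where "n * s \<in> right_ideal_sum ys" "n * s * b = n"
      using n unfolding minimal_right_ideal_gen_def by blast
    then have "n \<in> right_ideal_sum ys" by (metis right_ideal_sum_mult_right)
    then show ?thesis using Cons.IH by auto
  next
    case False
    then have "\<And>a. n * a \<in> right_ideal_sum ys \<Longrightarrow> n * a = 0" by blast
    then obtain c where c: "c * n = n" "\<And>p. p \<in> right_ideal_sum ys \<Longrightarrow> c * p = 0"
      using left_multiplier_exists[OF right_ideal_right_ideal_sum] by blast
    obtain t p where "n = y * t + p" "p \<in> right_ideal_sum ys" using Cons.prems by auto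
    then have "n = c * y * t" using c by (simp add: distrib_left mult.assoc)
    then show ?thesis by auto
  qed
qed

lemma subbimodule_ideal_gen: "subbimodule sc (ideal_gen x)"
  unfolding subbimodule_def
  using ideal_gen_zero ideal_gen_add ideal_gen_mult_left ideal_gen_mult_right
  by (metis scale_eq_mult_right)

lemma minimal_right_ideal_gen_in_ideal_gen:
  fixes n :: 'a
  assumes "minimal_right_ideal_gen n" and "n \<in> ideal_gen x"
  obtains d b where "n = d * x * b"
proof -
  obtain as where "n \<in> right_ideal_sum (map (\<lambda>a. a * x) as)"
    using assms(2) unfolding ideal_gen_def by blast
  then obtain y c b where "y \<in> set (map (\<lambda>a. a * x) as)" "n = c * y * b"
    using minimal_right_ideal_gen_in_sum[OF assms(1)] by blast
  then obtain a where "n = c * (a * x) * b" by auto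
  then have "n = (c * a) * x * b" by (simp add: mult.assoc)
  then show ?thesis by (rule that)
qed

text \<open>N contains some n = d x b generating a minimal right ideal. The right annihilator of
  d x is that of x, so c d x = x for some c by Baer's criterion; hence x b = c n \<in> N, and
  then x \<in> N.\<close>
lemma generator_in_subbimodule:
  assumes x: "minimal_right_ideal_gen x"
    and N: "subbimodule sc N" "N \<subseteq> ideal_gen x" "N \<noteq> {0}"
  shows "x \<in> N"
proof -
  have N0: "0 \<in> N" and Nleft: "\<And>a p. p \<in> N \<Longrightarrow> a * p \<in> N"
    and Nright: "\<And>a p. p \<in> N \<Longrightarrow> p * a \<in> N"
    using N(1) unfolding subbimodule_def by blast+
  obtain n0 where "n0 \<in> N" "n0 \<noteq> 0" using N(3) N0 by blast
  then obtain n where n: "n \<in> N" "minimal_right_ideal_gen n"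
    using exists_minimal_right_ideal_gen Nright by blast
  moreover have "n \<in> ideal_gen x" using n(1) N(2) by blast
  ultimately obtain d b where ndb: "n = d * x * b"
    using minimal_right_ideal_gen_in_ideal_gen by blast
  have n0: "n \<noteq> 0" using n(2) by (simp add: minimal_right_ideal_gen_def)
  have "x * s = 0" if "d * x * s = 0" for s
  proof (rule ccontr)
    assume "x * s \<noteq> 0"
    then obtain b' where "x * s * b' = x" using x unfolding minimal_right_ideal_gen_def by blast
    then have "d * x = d * x * s * b'" by (simp add: mult.assoc)
    with that ndb n0 show False by simp
  qed
  then obtain c where "c * (d * x) = x"
    using left_multiple_if_annihilator_le[of "d * x" x] by (metis mult.assoc)
  then have "c * n = x * b" by (simp add: ndb flip: mult.assoc)
  then have xb: "x * b \<in> N" using Nleft[OF n(1)] by metis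
  have "x * b \<noteq> 0" using ndb n0 by (auto simp: mult.assoc)
  then obtain b' where "x * b * b' = x" using x unfolding minimal_right_ideal_gen_def by blast
  with Nright[OF xb] show "x \<in> N" by metis
qed

lemma simple_subbimodule_ideal_gen:
  assumes x: "minimal_right_ideal_gen x"
  shows "simple_subbimodule sc (ideal_gen x)"
proof -
  have "ideal_gen x \<subseteq> N" if "subbimodule sc N" "N \<subseteq> ideal_gen x" "N \<noteq> {0}" for N
    using that generator_in_subbimodule[OF x that]
    by (intro ideal_gen_least) (auto simp: subbimodule_def)
  then have "N = {0} \<or> N = ideal_gen x" if "subbimodule sc N" "N \<subseteq> ideal_gen x" for N
    using that by blast
  moreover have "ideal_gen x \<noteq> {0}"
    using ideal_gen_self x by (auto simp: minimal_right_ideal_gen_def)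
  ultimately show ?thesis
    unfolding simple_subbimodule_def using subbimodule_ideal_gen by blast
qed

lemma minimal_right_ideal_gen_in_bimodule_socle:
  assumes "minimal_right_ideal_gen x"
  shows "x \<in> bimodule_socle sc"
proof -
  have "x \<in> \<Union>{M. simple_subbimodule sc M}"
    using simple_subbimodule_ideal_gen[OF assms] ideal_gen_self by blast
  then show ?thesis unfolding bimodule_socle_def by (rule vs.span_base)
qed

lemma bimodule_socle_mult_closed:
  assumes "y \<in> bimodule_socle sc"
  shows "a * y * b \<in> bimodule_socle sc"
proof -
  have U: "a * g * b \<in> \<Union>{M. simple_subbimodule sc M}"
    if g: "g \<in> \<Union>{M. simple_subbimodule sc M}" for g
  proof -
    obtain M where M: "simple_subbimodule sc M" "g \<in> M" using g by blast
    then have "\<And>c p. p \<in> M \<Longrightarrow> c * p \<in> M \<and> p * c \<in> M"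
      by (simp add: simple_subbimodule_def subbimodule_def)
    then have "a * g * b \<in> M" using M(2) by blast
    with M(1) show ?thesis by blast
  qed
  from assms[unfolded bimodule_socle_def] show ?thesis unfolding bimodule_socle_def
  proof (induction rule: vs.span_induct_alt)
    case base
    then show ?case by (simp add: vs.span_zero)
  next
    case (step c g y)
    have "a * (sc c g + y) * b = sc c (a * g * b) + a * y * b"
      by (simp add: distrib_left distrib_right scale_sandwich)
    then show ?case
      using U[OF step(1)] step(2) by (simp add: vs.span_add vs.span_scale vs.span_base)
  qed
qed

lemma kdual_sum:
  assumes h: "h \<in> kdual sc S" and S: "vs.subspace S" and F: "finite F" "F \<subseteq> S"
  shows "h (\<Sum>b\<in>F. sc (u b) b) = (\<Sum>b\<in>F. u b * h b)"
  using F
proof (induction F rule: finite_induct)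
  case empty
  have "h (sc 0 0) = 0 * h 0" using h vs.subspace_0[OF S] unfolding kdual_def by blast
  then show ?case by simp
next
  case (insert b F)
  have hadd: "\<And>x y. x \<in> S \<Longrightarrow> y \<in> S \<Longrightarrow> h (x + y) = h x + h y"
    and hscale: "\<And>c x. x \<in> S \<Longrightarrow> h (sc c x) = c * h x"
    using h unfolding kdual_def by blast+
  have "b \<in> S" "(\<Sum>b\<in>F. sc (u b) b) \<in> S"
    using insert(4) by (auto intro!: vs.subspace_sum[OF S] vs.subspace_scale[OF S])
  then show ?case
    using insert by (simp add: hadd hscale vs.subspace_scale[OF S])
qed

lemma coordinate_in_kdual:
  assumes S: "vs.subspace S" and B: "vs.independent B" "S \<subseteq> vs.span B"
  shows "(\<lambda>y. if y \<in> S then vs.representation B y b else 0) \<in> kdual sc S"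
proof -
  define f where "f = (\<lambda>y. if y \<in> S then vs.representation B y b else 0)"
  have span: "y \<in> vs.span B" if "y \<in> S" for y
    using that B(2) by blast
  have "f (y + z) = f y + f z" if "y \<in> S" "z \<in> S" for y z
    using that vs.subspace_add[OF S] span[OF that(1)] span[OF that(2)]
    by (simp add: f_def vs.representation_add[OF B(1)])
  moreover have "f (sc c y) = c * f y" if "y \<in> S" for c y
    using that vs.subspace_scale[OF S] span[OF that]
    by (simp add: f_def vs.representation_scale[OF B(1)])
  moreover have "f y = 0" if "y \<notin> S" for y
    using that by (simp add: f_def)
  ultimately have "f \<in> kdual sc S" unfolding kdual_def by blast
  then show ?thesis by (simp add: f_def)
qed

lemma kdual_finitely_spanned:
  fixes S :: "'a set"
  assumes S: "vs.subspace S"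
  obtains \<Phi> where "finite \<Phi>" and "kdual sc S \<subseteq> module.span (\<lambda>c (f::'a \<Rightarrow> 'k) y. c * f y) \<Phi>"
proof -
  interpret fs: vector_space "\<lambda>c (f::'a \<Rightarrow> 'k) y. c * f y" by (rule vector_space_functions)
  obtain B where B: "B \<subseteq> S" "vs.independent B" "S \<subseteq> vs.span B"
    using vs.maximal_independent_subset[of S] by blast
  have finB: "finite B" using fdv.finiteI_independent[OF B(2)] .
  define coord where "coord b y = (if y \<in> S then vs.representation B y b else 0)" for b y
  have "h \<in> fs.span (coord ` B)" if h: "h \<in> kdual sc S" for h
  proof -
    have "h y = (\<Sum>b\<in>B. h b * coord b y)" for y
    proof (cases "y \<in> S")
      case True
      then have "(\<Sum>b\<in>B. sc (vs.representation B y b) b) = y"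
        using vs.sum_representation_eq[OF B(2) _ finB order_refl] B(3) by blast
      then have "h y = h (\<Sum>b\<in>B. sc (vs.representation B y b) b)" by simp
      also have "\<dots> = (\<Sum>b\<in>B. vs.representation B y b * h b)"
        by (rule kdual_sum[OF h S finB B(1)])
      finally have "h y = (\<Sum>b\<in>B. vs.representation B y b * h b)" .
      then show ?thesis using True by (simp add: coord_def mult.commute)
    next
      case False
      then show ?thesis using h by (simp add: coord_def kdual_def)
    qed
    then have "h = (\<lambda>y. \<Sum>b\<in>B. h b * coord b y)" by (rule ext)
    also have "\<dots> = (\<Sum>b\<in>B. (\<lambda>y. h b * coord b y))" by (simp add: fun_eq_iff sum_fun_apply)
    also have "\<dots> \<in> fs.span (coord ` B)"
      by (intro fs.span_sum) (simp add: fs.span_scale fs.span_base)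
    finally show ?thesis .
  qed
  then have "kdual sc S \<subseteq> fs.span (coord ` B)" by blast
  with finB show ?thesis by (intro that[of "coord ` B"]) simp_all
qed

lemma kdual_separates:
  assumes S: "vs.subspace S" and v: "v \<in> S" "v \<noteq> 0"
  obtains f where "f \<in> kdual sc S" and "f v \<noteq> 0"
proof -
  have "{v} \<subseteq> S" "vs.independent {v}"
    using v by (simp_all add: vs.independent_insert vs.span_empty)
  then obtain B where B: "{v} \<subseteq> B" "vs.independent B" "S \<subseteq> vs.span B"
    by (rule vs.maximal_independent_subset_extend)
  have "(\<lambda>y. if y \<in> S then vs.representation B y v else 0) \<in> kdual sc S"
    using coordinate_in_kdual[OF S B(2,3)] .
  moreover have "vs.representation B v v = 1"
    using vs.representation_basis[OF B(2)] B(1) by simp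
  ultimately show ?thesis
    using v(1) by (intro that[of "\<lambda>y. if y \<in> S then vs.representation B y v else 0"]) simp_all
qed

lemma dim_corner_dual_pos:
  assumes S: "vs.subspace S" and closed: "\<And>y. y \<in> S \<Longrightarrow> b * y * a \<in> S"
    and x: "x \<in> S" "b * x * a \<noteq> 0"
  shows "vector_space.dim (\<lambda>c (f::'a \<Rightarrow> 'k) y. c * f y)
           ((\<lambda>f. dual_act S a f b) ` kdual sc S) > 0"
proof -
  interpret fs: vector_space "\<lambda>c (f::'a \<Rightarrow> 'k) y. c * f y" by (rule vector_space_functions)
  have corner: "dual_act S a f b \<in> kdual sc S" if "f \<in> kdual sc S" for f
    using that closed vs.subspace_add[OF S] vs.subspace_scale[OF S]
    by (simp add: kdual_def dual_act_def distrib_left distrib_right scale_sandwich)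
  obtain \<Phi> where "finite \<Phi>" "kdual sc S \<subseteq> fs.span \<Phi>"
    using kdual_finitely_spanned[OF S] by blast
  moreover obtain f where "f \<in> kdual sc S" "f (b * x * a) \<noteq> 0"
    using kdual_separates[OF S closed[OF x(1)] x(2)] by blast
  moreover have "dual_act S a f b x = f (b * x * a)" using x(1) by (simp add: dual_act_def)
  ultimately show ?thesis
    using corner by (intro fs.dim_pos_if_finitely_spanned[of _ \<Phi> "dual_act S a f b"]) auto
qed

lemma num_new_arrows_pos:
  assumes "x \<in> bimodule_socle sc" and "e j * x * e i \<noteq> 0"
  shows "num_new_arrows sc e j i > 0"
  unfolding num_new_arrows_def corner_dual_socle_def Let_def
  using assms bimodule_socle_mult_closed
  by (intro dim_corner_dual_pos) (simp_all add: bimodule_socle_def vs.subspace_span)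

end

theorem proposition3p3:
  fixes sc :: "'k::alg_closed_field \<Rightarrow> 'a::ring_1 \<Rightarrow> 'a"
    and e :: "nat \<Rightarrow> 'a" and r :: nat
  assumes "fd_algebra sc"
    and "complete_primitive_idempotents e r"
    and "basic_wrt sc e r"
    and "selfinjective sc"
  shows "\<forall>i\<in>{1..r}. \<exists>j\<in>{1..r}. num_new_arrows sc e j i > 0"
proof
  interpret selfinjective_algebra sc
    using assms(1,4) by unfold_locales
  fix i assume "i \<in> {1..r}"
  then obtain j x where "j \<in> {1..r}" and x: "minimal_right_ideal_gen x" "e j * x = x" "x * e i \<noteq> 0"
    using nakayama_permutation_surj[OF assms(2,3)] by blast
  moreover have "num_new_arrows sc e j i > 0"
    using num_new_arrows_pos[OF minimal_right_ideal_gen_in_bimodule_socle[OF x(1)]] x(2,3) by simp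
  ultimately show "\<exists>j\<in>{1..r}. num_new_arrows sc e j i > 0" by blast
qed
end
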